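(* Let $N\ge 2$ be even and let $B_N=K_{N/2,N/2}$ be the complete bipartite graph with two parts of size $N/2$ each, and $K_N$ the complete graph, both on vertex set $\{1,\dots,N\}$. Then \[ \rho(B_N,K_N)>\frac{1}{e-1}\cdot\frac1N \qquad\text{and}\qquad \rho(K_N,B_N)<\frac{e}{e-1}\cdot\frac1N. \]
   Context: Moran Birth-death process on two graphs (neutral case): $G^A$ and $G^B$ are connected undirected simple graphs on the same vertex set $\{1,\dots,N\}$. Every vertex is occupied by exactly one individual, of type $A$ (mutant) or type $B$ (resident). In each discrete time step, one individual is chosen uniformly at random among all $N$ individuals to reproduce; its offspring (of the same type) replaces the individual at a vertex chosen uniformly at random among the neighbors of the parent's vertex, where neighbors are taken in $G^A$ if the parent is of type $A$ and in $G^B$ if the parent is of type $B$. The all-$A$ and all-$B$ states are absorbing. The fixation probability $\rho(G^A,G^B)$ is the probability that the process reaches the all-$A$ state when started from exactly one type-$A$ individual at a uniformly random vertex, all other vertices of type $B$. Here $e$ is Euler's number. *)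

theory Defs
  imports "HOL-Probability.Probability"
begin

text \<open>A graph on the vertex set {1..N} is given by a symmetric irreflexive
adjacency relation E. States of the Moran process are the sets of vertices
occupied by type A (mutants); all other vertices of {1..N} are type B.\<close>

definition nbrs :: "(nat \<Rightarrow> nat \<Rightarrow> bool) \<Rightarrow> nat \<Rightarrow> nat \<Rightarrow> nat set" where
  "nbrs E N v = {u \<in> {1..N}. E v u}"

text \<open>One step of the neutral Birth-death process: a uniformly random individual
reproduces; its offspring replaces a uniformly random neighbour, neighbours taken
in GA (edge relation EA) if the parent is of type A and in GB (EB) otherwise.\<close>

definition moran_step ::
  "(nat \<Rightarrow> nat \<Rightarrow> bool) \<Rightarrow> (nat \<Rightarrow> nat \<Rightarrow> bool) \<Rightarrow> nat \<Rightarrow> nat set \<Rightarrow> nat set pmf" where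
  "moran_step EA EB N S =
     bind_pmf (pmf_of_set {1..N}) (\<lambda>v.
       if v \<in> S then map_pmf (\<lambda>u. insert u S) (pmf_of_set (nbrs EA N v))
       else map_pmf (\<lambda>u. S - {u}) (pmf_of_set (nbrs EB N v)))"

definition moran_dist ::
  "(nat \<Rightarrow> nat \<Rightarrow> bool) \<Rightarrow> (nat \<Rightarrow> nat \<Rightarrow> bool) \<Rightarrow> nat \<Rightarrow> nat set \<Rightarrow> nat \<Rightarrow> nat set pmf" where
  "moran_dist EA EB N S n = ((\<lambda>p. bind_pmf p (moran_step EA EB N)) ^^ n) (return_pmf S)"

text \<open>Fixation probability: probability of (eventually) reaching the all-A state
{1..N}; since this state is absorbing, it is the limit of the probability of being
in it at time n.\<close>

definition fix_prob ::
  "(nat \<Rightarrow> nat \<Rightarrow> bool) \<Rightarrow> (nat \<Rightarrow> nat \<Rightarrow> bool) \<Rightarrow> nat \<Rightarrow> real" where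
  "fix_prob EA EB N =
     (\<Sum>v\<in>{1..N}. lim (\<lambda>n. pmf (moran_dist EA EB N {v} n) {1..N})) / real N"

text \<open>Complete graph K_N and complete bipartite graph K_{N/2,N/2} with parts
{1..N/2} and {N/2+1..N}.\<close>

definition complete_graph :: "nat \<Rightarrow> nat \<Rightarrow> bool" where
  "complete_graph u v \<longleftrightarrow> u \<noteq> v"

definition bipartite_half :: "nat \<Rightarrow> nat \<Rightarrow> nat \<Rightarrow> bool" where
  "bipartite_half N u v \<longleftrightarrow> ((u \<le> N div 2) \<noteq> (v \<le> N div 2))"

end

theory Submission
  imports Defs
begin

text \<open>Follow the number s of mutants. From a state S the next step increases s with
  probability a/N and decreases it with probability b/N, where a and b are the boundary
  weights of S in the mutant graph and of its complement in the resident graph. On K_N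
  both weights equal s(N - s)/(N - 1); on B_N they are at least s(N - s)/N. For a ratio r,
  the potential phi(s) = (r^s - 1)/(r^N - 1) changes in expectation by a positive multiple
  of r a - b. With mutants on B_N and residents on K_N, r = N/(N - 1) makes phi a
  submartingale, and since the process almost surely leaves the transient states (the same
  computation with r = 3), the fixation probability is at least phi(1). With the graphs
  exchanged, r = (N - 1)/N makes phi a supermartingale, so phi(1) bounds fixation from above.
  Comparing (1 + 1/(N - 1))^N and (1 - 1/N)^N with e turns the two values of phi(1) into the
  stated bounds.\<close>

section \<open>Geometric potentials\<close>

text \<open>The fixation probability from k mutants of the birth-death chain on {0..N} whose
  up/down transition ratio is r in every transient state.\<close>
definition geom_potential :: "real \<Rightarrow> nat \<Rightarrow> nat \<Rightarrow> real" where
  "geom_potential r N k = (r ^ k - 1) / (r ^ N - 1)"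

lemma geom_potential_0 [simp]: "geom_potential r N 0 = 0"
  by (simp add: geom_potential_def)

lemma geom_potential_self: "r ^ N \<noteq> 1 \<Longrightarrow> geom_potential r N N = 1"
  by (simp add: geom_potential_def)

lemma geom_potential_Suc_diff:
  "geom_potential r N (Suc k) - geom_potential r N k = r ^ k * ((r - 1) / (r ^ N - 1))"
  by (simp add: geom_potential_def diff_divide_distrib[symmetric] algebra_simps)

lemma geom_potential_slope_pos:
  fixes r :: real
  assumes "0 < r" "r \<noteq> 1" "0 < N"
  shows "0 < (r - 1) / (r ^ N - 1)"
proof (cases "r < 1")
  case True
  then have "r ^ N < 1" using assms power_strict_mono[of r 1 N] by simp
  then show ?thesis using True by (simp add: divide_neg_neg del: power_strict_decreasing_iff)
next
  case False
  then have "1 < r" using assms(2) by simp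
  then have "1 < r ^ N" using assms(3) by (simp add: one_less_power)
  then show ?thesis using \<open>1 < r\<close> by simp
qed

lemma mono_geom_potential:
  fixes r :: real
  assumes "0 < r" "r \<noteq> 1" "0 < N"
  shows "mono (geom_potential r N)"
proof (rule incseq_SucI)
  fix k
  show "geom_potential r N k \<le> geom_potential r N (Suc k)"
    using geom_potential_Suc_diff[of r N k] geom_potential_slope_pos[OF assms] assms(1)
    by (smt (verit) zero_less_power mult_pos_pos)
qed

lemma geom_potential_bounds:
  fixes r :: real
  assumes "0 < r" "r \<noteq> 1" "0 < N" "k \<le> N"
  shows "of_bool (k = N) \<le> geom_potential r N k" "geom_potential r N k \<le> of_bool (0 < k)"
proof -
  have "r ^ N \<noteq> 1" using geom_potential_slope_pos[OF assms(1-3)] by auto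
  then have top: "geom_potential r N N = 1" by (rule geom_potential_self)
  have "geom_potential r N 0 \<le> geom_potential r N k" "geom_potential r N k \<le> geom_potential r N N"
    using mono_geom_potential[OF assms(1-3)] assms(4) by (auto dest: monoD)
  then show "of_bool (k = N) \<le> geom_potential r N k" "geom_potential r N k \<le> of_bool (0 < k)"
    using top by auto
qed

section \<open>Numerical estimates\<close>

lemma exp_1_gt_2_7: "exp 1 > (2.7::real)"
  using e_approx_32 by (simp add: abs_if split: if_splits)

lemma ln_add_one_le_cubic:
  fixes x :: real
  assumes "0 \<le> x"
  shows "ln (1 + x) \<le> x - x^2/2 + x^3/3"
proof -
  let ?f = "\<lambda>t::real. t - t^2/2 + t^3/3 - ln (1 + t)"
  have "?f 0 \<le> ?f x"
  proof (rule DERIV_nonneg_imp_nondecreasing[OF assms])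
    fix t :: real assume t: "0 \<le> t" "t \<le> x"
    have "(?f has_real_derivative (1 - t + t^2 - 1/(1+t))) (at t)"
      using t by (auto intro!: derivative_eq_intros simp: power2_eq_square field_simps)
    moreover have "1 - t + t^2 - 1/(1+t) = t^3/(1+t)"
      using t by (simp add: field_simps power2_eq_square power3_eq_cube)
    ultimately show "\<exists>y. (?f has_real_derivative y) (at t) \<and> 0 \<le> y"
      using t by auto
  qed
  then show ?thesis by simp
qed

lemma one_plus_inverse_power_Suc_le:
  assumes "n \<ge> 2"
  shows "(1 + 1 / real n) ^ Suc n \<le> exp 1 * (2 * real n / (2 * real n - 1))"
proof -
  define x where "x = real n"
  have x: "x \<ge> 2" using assms by (simp add: x_def)
  have "(x + 1) * ln (1 + 1/x) \<le> (x + 1) * (1/x - (1/x)^2/2 + (1/x)^3/3)"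
    using ln_add_one_le_cubic[of "1/x"] x by (intro mult_left_mono) auto
  also have "\<dots> = 1 + 1/(2*x) - (1/(6*x^2) - 1/(3*x^3))"
    using x by (simp add: field_simps power2_eq_square power3_eq_cube)
  also have "\<dots> \<le> 1 + 1/(2*x)"
    using x by (simp add: field_simps power2_eq_square power3_eq_cube)
  finally have ln_le: "(x + 1) * ln (1 + 1/x) \<le> 1 + 1/(2*x)" .
  have "exp (1/(2*x)) \<le> 1 / (1 - 1/(2*x))"
    using exp_minus_ge[of "1/(2*x)"] x by (simp add: exp_minus field_simps)
  also have "\<dots> = 2*x/(2*x - 1)"
    using x by (simp add: field_simps)
  finally have exp_le: "exp (1/(2*x)) \<le> 2*x/(2*x - 1)" .
  have "(1 + 1/x) ^ Suc n = exp (ln (1 + 1/x)) ^ Suc n"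
    using x by (simp add: add_pos_pos)
  also have "\<dots> = exp ((x + 1) * ln (1 + 1/x))"
    by (subst exp_of_nat_mult[symmetric]) (simp add: x_def algebra_simps)
  also have "\<dots> \<le> exp 1 * exp (1/(2*x))"
    using ln_le by (simp flip: exp_add)
  also have "\<dots> \<le> exp 1 * (2*x/(2*x - 1))"
    by (rule mult_left_mono[OF exp_le]) simp
  finally show ?thesis by (simp add: x_def)
qed

lemma geom_potential_upper_numeric:
  assumes "N \<ge> 2"
  shows "geom_potential ((real N - 1) / real N) N 1 < exp 1 / (exp 1 - 1) * (1 / real N)"
proof -
  define q where "q = (real N - 1) / real N"
  have e: "exp (1::real) > 1" by simp
  then have inv_e: "1 / exp 1 < (1::real)" by simp
  have N: "real N \<ge> 2" using assms by simp
  have q: "q = 1 - 1 / real N" "q \<ge> 0"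
    using N by (auto simp: q_def diff_divide_distrib)
  have "q ^ N < exp (- (1 / real N)) ^ N"
    using exp_minus_greater[of "1/real N"] N q by (intro power_strict_mono) auto
  also have "\<dots> = exp (-1)"
    using N by (simp flip: exp_of_nat_mult)
  finally have qN: "q ^ N < 1 / exp 1"
    by (simp add: exp_minus inverse_eq_divide)
  have qN1: "0 < 1 - q ^ N" using qN inv_e by linarith
  have e1: "0 < 1 - 1 / exp (1::real)" using inv_e by linarith
  have "geom_potential q N 1 = (- (1 / real N)) / (- (1 - q ^ N))"
    unfolding geom_potential_def using q(1) by simp
  also have "\<dots> = (1 / real N) / (1 - q ^ N)"
    by (rule minus_divide_divide)
  also have "\<dots> < (1 / real N) / (1 - 1 / exp 1)"
  proof (rule divide_strict_left_mono)
    show "0 < (1 - q ^ N) * (1 - 1 / exp 1)"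
      using qN1 e1 by (rule mult_pos_pos)
  qed (use qN N in auto)
  also have "\<dots> = exp 1 / (exp 1 - 1) * (1 / real N)"
    using e by (simp add: field_simps)
  finally show ?thesis unfolding q_def .
qed

lemma geom_potential_lower_numeric:
  assumes "N \<ge> 2"
  shows "1 / (exp 1 - 1) * (1 / real N) < geom_potential (real N / (real N - 1)) N 1"
proof -
  obtain n where N_eq: "N = Suc n" and n: "n \<ge> 1"
    using assms by (cases N) auto
  define m where "m = real n"
  define R where "R = (1 + 1 / m) ^ Suc n"
  have m: "m \<ge> 1" using n by (simp add: m_def)
  have e: "exp (1::real) > 2.7" by (rule exp_1_gt_2_7)
  have R1: "R > 1" unfolding R_def using m by (intro one_less_power) auto
  have key: "m * (R - 1) < (exp 1 - 1) * (m + 1)"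
  proof -
    consider "n = 1" | "n = 2" | "n \<ge> 3" using n by linarith
    then show ?thesis
    proof cases
      case 1 then show ?thesis using e by (simp add: R_def m_def)
    next
      case 2 then show ?thesis using e by (simp add: R_def m_def power_divide)
    next
      case 3
      then have m3: "m \<ge> 3" by (simp add: m_def)
      have "m * (R - 1) \<le> m * (exp 1 * (2 * m / (2 * m - 1)) - 1)"
        using one_plus_inverse_power_Suc_le[of n] 3 m by (intro mult_left_mono) (auto simp: R_def m_def)
      also have "\<dots> = (m * (exp 1 * (2 * m) - (2 * m - 1))) / (2 * m - 1)"
        using m by (simp add: field_simps)
      also have "\<dots> < (exp 1 - 1) * (m + 1)"
      proof -
        have "0 \<le> (m - 3) * (exp 1 - 2)"
          using m3 e by simp
        then have "0 < (m - 3) * (exp 1 - 2) + (2 * exp 1 - 5)"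
          using e by linarith
        also have "\<dots> = (exp 1 - 1) * (m + 1) * (2 * m - 1) - m * (exp 1 * (2 * m) - (2 * m - 1))"
          by (simp add: algebra_simps)
        finally have "m * (exp 1 * (2 * m) - (2 * m - 1)) < (exp 1 - 1) * (m + 1) * (2 * m - 1)"
          by simp
        then show ?thesis
          using m by (simp add: divide_less_eq)
      qed
      finally show ?thesis .
    qed
  qed
  have r: "real N / (real N - 1) = 1 + 1 / m"
    using m by (simp add: N_eq m_def add_divide_distrib)
  have "1 / (exp 1 - 1) * (1 / real N) = (1 / m) / ((exp 1 - 1) * (m + 1) / m)"
    using m e by (simp add: N_eq m_def)
  also have "\<dots> < (1 / m) / (R - 1)"
  proof (rule divide_strict_left_mono)
    show "R - 1 < (exp 1 - 1) * (m + 1) / m"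
      using key m by (simp add: less_divide_eq mult.commute)
    show "0 < (exp 1 - 1) * (m + 1) / m * (R - 1)"
      using R1 m e by simp
  qed (use m in simp)
  also have "\<dots> = geom_potential (real N / (real N - 1)) N 1"
    unfolding geom_potential_def r R_def N_eq[symmetric] by simp
  finally show ?thesis .
qed

section \<open>The Moran process on a pair of graphs\<close>

text \<open>\<open>One_nat_def\<close> is a simp rule here; it would rewrite \<open>{1..N}\<close> into \<open>{Suc 0..N}\<close>.\<close>
declare One_nat_def [simp del]

lemma finite_nbrs [simp]: "finite (nbrs E N v)"
  by (simp add: nbrs_def)

lemma nbrs_subset: "nbrs E N v \<subseteq> {1..N}"
  by (auto simp: nbrs_def)

text \<open>N times the probability that a step picks a parent in S and places its offspring
  outside S, when parents in S use the edges of E.\<close>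
definition boundary_weight :: "(nat \<Rightarrow> nat \<Rightarrow> bool) \<Rightarrow> nat \<Rightarrow> nat set \<Rightarrow> real" where
  "boundary_weight E N S = (\<Sum>v\<in>S. real (card (nbrs E N v - S)) / real (card (nbrs E N v)))"

lemma boundary_weight_empty [simp]: "boundary_weight E N {} = 0"
  by (simp add: boundary_weight_def)

lemma boundary_weight_vertices [simp]: "boundary_weight E N {1..N} = 0"
  unfolding boundary_weight_def
proof (intro sum.neutral ballI)
  fix v
  show "real (card (nbrs E N v - {1..N})) / real (card (nbrs E N v)) = 0"
    using nbrs_subset[of E N v] by (metis Diff_eq_empty_iff card.empty of_nat_0 div_0)
qed

lemma boundary_weight_nonneg: "0 \<le> boundary_weight E N S"
  by (simp add: boundary_weight_def sum_nonneg)

lemma sum_if_mem_divide_card: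
  assumes "finite A" "A \<noteq> {}"
  shows "(\<Sum>u\<in>A. if u \<in> S then a else b) / real (card A)
       = a + (b - a) * real (card (A - S)) / real (card A)"
proof -
  have c: "card A = card (A \<inter> S) + card (A - S)"
    using assms(1) by (metis card_Int_Diff)
  have "card A > 0" using assms by (simp add: card_gt_0_iff)
  then have "real (card (A \<inter> S)) + real (card (A - S)) > 0" using c by linarith
  moreover have "(\<Sum>u\<in>A. if u \<in> S then a else b) = a * card (A \<inter> S) + b * card (A - S)"
    using assms(1) by (simp add: sum.If_cases Diff_eq)
  ultimately show ?thesis using c by (simp add: field_simps)
qed

locale moran_graphs =
  fixes EA EB :: "nat \<Rightarrow> nat \<Rightarrow> bool" and N :: nat
  assumes N_pos: "0 < N"
    and nbrs_A_nonempty: "v \<in> {1..N} \<Longrightarrow> nbrs EA N v \<noteq> {}"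
    and nbrs_B_nonempty: "v \<in> {1..N} \<Longrightarrow> nbrs EB N v \<noteq> {}"
begin

definition drift :: "(nat \<Rightarrow> real) \<Rightarrow> nat set \<Rightarrow> real" where
  "drift g S = (g (Suc (card S)) - g (card S)) * boundary_weight EA N S
             + (g (card S - 1) - g (card S)) * boundary_weight EB N ({1..N} - S)"

lemma drift_empty [simp]: "drift g {} = 0"
  by (simp add: drift_def)

lemma drift_vertices [simp]: "drift g {1..N} = 0"
  by (simp add: drift_def)

lemma set_pmf_moran_step:
  assumes "S \<subseteq> {1..N}"
  shows "set_pmf (moran_step EA EB N S) \<subseteq> Pow {1..N}"
  using assms N_pos nbrs_A_nonempty nbrs_B_nonempty
  by (auto simp: moran_step_def set_bind_pmf nbrs_def split: if_splits)

lemma set_pmf_moran_dist: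
  assumes "S0 \<subseteq> {1..N}"
  shows "set_pmf (moran_dist EA EB N S0 n) \<subseteq> Pow {1..N}"
proof (induction n)
  case 0
  then show ?case using assms by (simp add: moran_dist_def)
next
  case (Suc n)
  then show ?case using set_pmf_moran_step
    by (auto simp: moran_dist_def set_bind_pmf)
qed

lemma finite_set_pmf_moran_dist:
  "S0 \<subseteq> {1..N} \<Longrightarrow> finite (set_pmf (moran_dist EA EB N S0 n))"
  by (meson finite_subset set_pmf_moran_dist finite_Pow_iff finite_atLeastAtMost)

lemma integrable_moran_dist:
  "S0 \<subseteq> {1..N} \<Longrightarrow> integrable (measure_pmf (moran_dist EA EB N S0 n)) (f :: nat set \<Rightarrow> real)"
  by (rule integrable_measure_pmf_finite[OF finite_set_pmf_moran_dist])

lemma expectation_moran_step_card: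
  assumes S: "S \<subseteq> {1..N}"
  shows "measure_pmf.expectation (moran_step EA EB N S) (\<lambda>T. g (card T))
       = g (card S) + drift g S / N"
proof -
  let ?s = "card S"
  have fin: "finite S" using S finite_subset by blast
  define e where "e v = g ?s + (if v \<in> S
      then (g (Suc ?s) - g ?s) * card (nbrs EA N v - S) / card (nbrs EA N v)
      else (g (?s - 1) - g ?s) * card (nbrs EB N v - ({1..N} - S)) / card (nbrs EB N v))" for v
  have e: "measure_pmf.expectation
        (if v \<in> S then map_pmf (\<lambda>u. insert u S) (pmf_of_set (nbrs EA N v))
         else map_pmf (\<lambda>u. S - {u}) (pmf_of_set (nbrs EB N v))) (\<lambda>T. g (card T)) = e v"
    if v: "v \<in> {1..N}" for v
  proof (cases "v \<in> S")
    case True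
    have "(\<Sum>u\<in>nbrs EA N v. g (card (insert u S)))
        = (\<Sum>u\<in>nbrs EA N v. if u \<in> S then g ?s else g (Suc ?s))"
      using fin by (intro sum.cong) (auto simp: insert_absorb)
    then show ?thesis
      using True nbrs_A_nonempty[OF v] sum_if_mem_divide_card[of "nbrs EA N v" S "g ?s" "g (Suc ?s)"]
      by (simp add: integral_pmf_of_set e_def)
  next
    case False
    have "(\<Sum>u\<in>nbrs EB N v. g (card (S - {u})))
        = (\<Sum>u\<in>nbrs EB N v. if u \<in> {1..N} - S then g ?s else g (?s - 1))"
      using fin nbrs_subset[of EB N v] by (intro sum.cong) auto
    then show ?thesis
      using False nbrs_B_nonempty[OF v] sum_if_mem_divide_card[of "nbrs EB N v" "{1..N} - S" "g ?s" "g (?s - 1)"]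
      by (simp add: integral_pmf_of_set e_def)
  qed
  have "measure_pmf.expectation (moran_step EA EB N S) (\<lambda>T. g (card T)) = (\<Sum>v\<in>{1..N}. e v) / N"
    unfolding moran_step_def using N_pos e nbrs_A_nonempty nbrs_B_nonempty
    by (subst pmf_expectation_bind_pmf_of_set) (auto simp: sum_divide_distrib divide_inverse_commute sum_distrib_left)
  also have "(\<Sum>v\<in>{1..N}. e v) = N * g ?s + drift g S"
  proof -
    have "{1..N} \<inter> S = S" "{1..N} \<inter> - S = {1..N} - S" using S by auto
    then show ?thesis
      by (simp add: e_def drift_def boundary_weight_def sum.distrib sum.If_cases
          sum_distrib_left times_divide_eq_right)
  qed
  finally show ?thesis using N_pos by (simp add: add_divide_distrib)
qed

lemma subset_vertices_card_eq:
  assumes "S \<subseteq> {1..N}"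
  shows "card S = N \<longleftrightarrow> S = {1..N}" and "card S = 0 \<longleftrightarrow> S = {}"
  using assms card_subset_eq[OF finite_atLeastAtMost assms] finite_subset[OF assms] by auto

lemma moran_dist_Suc:
  "moran_dist EA EB N S0 (Suc n) = moran_dist EA EB N S0 n \<bind> moran_step EA EB N"
  by (simp add: moran_dist_def)

lemma expectation_moran_dist_Suc:
  fixes f :: "nat set \<Rightarrow> real"
  assumes "S0 \<subseteq> {1..N}"
  shows "measure_pmf.expectation (moran_dist EA EB N S0 (Suc n)) f
       = measure_pmf.expectation (moran_dist EA EB N S0 n)
           (\<lambda>S. measure_pmf.expectation (moran_step EA EB N S) f)"
proof -
  let ?p = "moran_dist EA EB N S0 n"
  have fin: "finite (set_pmf (moran_step EA EB N S))" if "S \<in> Pow {1..N}" for S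
    using set_pmf_moran_step[of S] that by (meson PowD finite_subset finite_Pow_iff finite_atLeastAtMost)
  have "measure_pmf.expectation (moran_dist EA EB N S0 (Suc n)) f
      = (\<Sum>S\<in>Pow {1..N}. pmf ?p S *\<^sub>R measure_pmf.expectation (moran_step EA EB N S) f)"
    unfolding moran_dist_Suc
    by (rule pmf_expectation_bind) (use fin set_pmf_moran_dist[OF assms] in auto)
  also have "\<dots> = measure_pmf.expectation ?p (\<lambda>S. measure_pmf.expectation (moran_step EA EB N S) f)"
    by (rule integral_measure_pmf[symmetric]) (use set_pmf_moran_dist[OF assms] in auto)
  finally show ?thesis .
qed

lemma expectation_moran_dist_card_Suc_ge:
  assumes S0: "S0 \<subseteq> {1..N}" and c: "\<And>S. S \<subseteq> {1..N} \<Longrightarrow> c S \<le> drift g S"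
  shows "measure_pmf.expectation (moran_dist EA EB N S0 n) (\<lambda>T. g (card T))
           + measure_pmf.expectation (moran_dist EA EB N S0 n) c / N
         \<le> measure_pmf.expectation (moran_dist EA EB N S0 (Suc n)) (\<lambda>T. g (card T))"
proof -
  let ?p = "moran_dist EA EB N S0 n"
  note int = integrable_moran_dist[OF S0]
  have "measure_pmf.expectation ?p (\<lambda>T. g (card T)) + measure_pmf.expectation ?p c / N
      = measure_pmf.expectation ?p (\<lambda>S. g (card S) + c S / N)"
    using int by simp
  also have "\<dots> \<le> measure_pmf.expectation ?p
                   (\<lambda>S. measure_pmf.expectation (moran_step EA EB N S) (\<lambda>T. g (card T)))"
  proof (intro integral_mono_AE[OF int int] AE_pmfI)
    fix S assume "S \<in> set_pmf ?p"
    then have S: "S \<subseteq> {1..N}" using set_pmf_moran_dist[OF S0] by blast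
    show "g (card S) + c S / N \<le> measure_pmf.expectation (moran_step EA EB N S) (\<lambda>T. g (card T))"
      using c[OF S] N_pos by (simp add: expectation_moran_step_card[OF S] divide_right_mono)
  qed
  also have "\<dots> = measure_pmf.expectation (moran_dist EA EB N S0 (Suc n)) (\<lambda>T. g (card T))"
    by (rule expectation_moran_dist_Suc[OF S0, symmetric])
  finally show ?thesis .
qed

lemma expectation_moran_dist_card_ge:
  assumes S0: "S0 \<subseteq> {1..N}" and "\<And>S. S \<subseteq> {1..N} \<Longrightarrow> 0 \<le> drift g S"
  shows "g (card S0) \<le> measure_pmf.expectation (moran_dist EA EB N S0 n) (\<lambda>T. g (card T))"
proof (induction n)
  case 0
  then show ?case by (simp add: moran_dist_def)
next
  case (Suc n)
  then show ?case
    using expectation_moran_dist_card_Suc_ge[OF S0, of "\<lambda>_. 0" g n] assms(2) by simp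
qed

lemma pmf_moran_dist_vertices:
  assumes S0: "S0 \<subseteq> {1..N}"
  shows "pmf (moran_dist EA EB N S0 n) {1..N}
       = measure_pmf.expectation (moran_dist EA EB N S0 n) (\<lambda>T. of_bool (card T = N))"
proof -
  let ?p = "moran_dist EA EB N S0 n"
  have "measure_pmf.expectation ?p (\<lambda>T. of_bool (card T = N))
      = (\<Sum>T\<in>Pow {1..N}. of_bool (card T = N) * pmf ?p T)"
    by (rule integral_measure_pmf_real) (use set_pmf_moran_dist[OF S0] in auto)
  also have "\<dots> = (\<Sum>T\<in>Pow {1..N}. if T = {1..N} then pmf ?p T else 0)"
    by (intro sum.cong) (auto simp: subset_vertices_card_eq)
  also have "\<dots> = pmf ?p {1..N}"
    by simp
  finally show ?thesis ..
qed

lemma drift_of_bool_card_eq_nonneg: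
  assumes "S \<subseteq> {1..N}"
  shows "0 \<le> drift (\<lambda>k. of_bool (k = N)) S"
proof (cases "S = {1..N}")
  case False
  then have "card S \<noteq> N" "card S - 1 \<noteq> N"
    using assms subset_vertices_card_eq(1)[OF assms] card_mono[OF _ assms] by auto
  then show ?thesis
    by (auto simp: drift_def boundary_weight_nonneg)
qed simp

lemma convergent_pmf_moran_dist_vertices:
  assumes S0: "S0 \<subseteq> {1..N}"
  shows "convergent (\<lambda>n. pmf (moran_dist EA EB N S0 n) {1..N})"
proof -
  have "incseq (\<lambda>n. pmf (moran_dist EA EB N S0 n) {1..N})"
  proof (rule incseq_SucI)
    fix n
    show "pmf (moran_dist EA EB N S0 n) {1..N} \<le> pmf (moran_dist EA EB N S0 (Suc n)) {1..N}"
      using expectation_moran_dist_card_Suc_ge[OF S0, of "\<lambda>_. 0" "\<lambda>k. of_bool (k = N)" n]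
        drift_of_bool_card_eq_nonneg
      by (simp add: pmf_moran_dist_vertices[OF S0])
  qed
  then obtain L where "(\<lambda>n. pmf (moran_dist EA EB N S0 n) {1..N}) \<longlonglongrightarrow> L"
    by (rule incseq_convergent[where B=1]) (auto simp: pmf_le_1)
  then show ?thesis by (rule convergentI)
qed

lemma expectation_moran_dist_mono:
  fixes f g :: "nat set \<Rightarrow> real"
  assumes S0: "S0 \<subseteq> {1..N}" and "\<And>T. T \<subseteq> {1..N} \<Longrightarrow> f T \<le> g T"
  shows "measure_pmf.expectation (moran_dist EA EB N S0 n) f
       \<le> measure_pmf.expectation (moran_dist EA EB N S0 n) g"
  using set_pmf_moran_dist[OF S0] assms(2)
  by (intro integral_mono_AE integrable_moran_dist[OF S0] AE_pmfI) blast

lemma lim_pmf_moran_dist_vertices_le: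
  assumes S0: "S0 \<subseteq> {1..N}"
    and drift: "\<And>S. S \<subseteq> {1..N} \<Longrightarrow> drift g S \<le> 0"
    and g: "\<And>k. k \<le> N \<Longrightarrow> of_bool (k = N) \<le> g k"
  shows "lim (\<lambda>n. pmf (moran_dist EA EB N S0 n) {1..N}) \<le> g (card S0)"
proof -
  have "pmf (moran_dist EA EB N S0 n) {1..N} \<le> g (card S0)" for n
  proof -
    have "- g (card S0) \<le> measure_pmf.expectation (moran_dist EA EB N S0 n) (\<lambda>T. - g (card T))"
      using drift by (intro expectation_moran_dist_card_ge[OF S0]) (simp add: drift_def algebra_simps)
    moreover have "pmf (moran_dist EA EB N S0 n) {1..N}
        \<le> measure_pmf.expectation (moran_dist EA EB N S0 n) (\<lambda>T. g (card T))"
      unfolding pmf_moran_dist_vertices[OF S0]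
      by (rule expectation_moran_dist_mono[OF S0]) (use g card_mono[of "{1..N}"] in auto)
    ultimately show ?thesis by simp
  qed
  then show ?thesis
    using convergent_pmf_moran_dist_vertices[OF S0]
    by (intro LIMSEQ_le_const2) (auto simp: convergent_LIMSEQ_iff)
qed

text \<open>Summing the drift bound over time bounds the partial sums of the expectations of f
  by N times the range of h on {0..N}, divided by the gap.\<close>
lemma expectation_moran_dist_tendsto_zero:
  assumes S0: "S0 \<subseteq> {1..N}" and "0 < \<delta>"
    and f_nonneg: "\<And>S. S \<subseteq> {1..N} \<Longrightarrow> 0 \<le> f S"
    and drift: "\<And>S. S \<subseteq> {1..N} \<Longrightarrow> \<delta> * f S \<le> drift h S"
  shows "(\<lambda>n. measure_pmf.expectation (moran_dist EA EB N S0 n) f) \<longlonglongrightarrow> 0"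
proof -
  define a where "a n = measure_pmf.expectation (moran_dist EA EB N S0 n) f" for n
  define H where "H n = measure_pmf.expectation (moran_dist EA EB N S0 n) (\<lambda>T. h (card T))" for n
  have a_nonneg: "0 \<le> a n" for n
    unfolding a_def using set_pmf_moran_dist[OF S0] f_nonneg
    by (intro integral_nonneg_AE AE_pmfI) blast
  have H_Suc: "H n + \<delta> * a n / N \<le> H (Suc n)" for n
    using expectation_moran_dist_card_Suc_ge[OF S0, of "\<lambda>S. \<delta> * f S" h n] drift
    by (simp add: H_def a_def)
  have H_ge: "h (card S0) + \<delta> / N * (\<Sum>k<n. a k) \<le> H n" for n
  proof (induction n)
    case 0
    then show ?case by (simp add: H_def moran_dist_def)
  next
    case (Suc n)
    then show ?case using H_Suc[of n] by (simp add: algebra_simps)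
  qed
  have H_le: "H n \<le> Max (h ` {..N})" for n
  proof -
    have "H n \<le> measure_pmf.expectation (moran_dist EA EB N S0 n) (\<lambda>_. Max (h ` {..N}))"
      unfolding H_def
      by (rule expectation_moran_dist_mono[OF S0]) (use card_mono[of "{1..N}"] in auto)
    then show ?thesis by simp
  qed
  have "(\<Sum>k<n. a k) \<le> (Max (h ` {..N}) - h (card S0)) * N / \<delta>" for n
  proof -
    have "\<delta> / N * (\<Sum>k<n. a k) \<le> Max (h ` {..N}) - h (card S0)"
      using H_ge[of n] H_le[of n] by linarith
    then show ?thesis using \<open>0 < \<delta>\<close> N_pos by (simp add: field_simps)
  qed
  then have "summable a"
    by (rule summableI_nonneg_bounded[OF a_nonneg])
  then show ?thesis
    unfolding a_def[symmetric] by (rule summable_LIMSEQ_zero)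
qed

lemma lim_pmf_moran_dist_vertices_ge:
  assumes S0: "S0 \<subseteq> {1..N}"
    and drift: "\<And>S. S \<subseteq> {1..N} \<Longrightarrow> 0 \<le> drift g S"
    and g: "\<And>k. k \<le> N \<Longrightarrow> g k \<le> of_bool (0 < k)"
    and transient: "(\<lambda>n. measure_pmf.expectation (moran_dist EA EB N S0 n)
                      (\<lambda>T. of_bool (0 < card T \<and> card T < N) :: real)) \<longlonglongrightarrow> 0"
  shows "g (card S0) \<le> lim (\<lambda>n. pmf (moran_dist EA EB N S0 n) {1..N})"
proof -
  let ?t = "\<lambda>n. measure_pmf.expectation (moran_dist EA EB N S0 n)
                 (\<lambda>T. of_bool (0 < card T \<and> card T < N))"
  have "g (card S0) \<le> pmf (moran_dist EA EB N S0 n) {1..N} + ?t n" for n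
  proof -
    have "g (card S0) \<le> measure_pmf.expectation (moran_dist EA EB N S0 n) (\<lambda>T. g (card T))"
      by (rule expectation_moran_dist_card_ge[OF S0 drift])
    also have "\<dots> \<le> measure_pmf.expectation (moran_dist EA EB N S0 n)
                     (\<lambda>T. of_bool (card T = N) + of_bool (0 < card T \<and> card T < N))"
    proof (rule expectation_moran_dist_mono[OF S0])
      fix T assume "T \<subseteq> {1..N}"
      then have "card T \<le> N" using card_mono[of "{1..N}"] by simp
      then show "g (card T) \<le> of_bool (card T = N) + of_bool (0 < card T \<and> card T < N)"
        using g[of "card T"] N_pos by auto
    qed
    also have "\<dots> = pmf (moran_dist EA EB N S0 n) {1..N} + ?t n"
      using integrable_moran_dist[OF S0] by (simp add: pmf_moran_dist_vertices[OF S0])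
    finally show ?thesis .
  qed
  moreover have "(\<lambda>n. pmf (moran_dist EA EB N S0 n) {1..N} + ?t n)
      \<longlonglongrightarrow> lim (\<lambda>n. pmf (moran_dist EA EB N S0 n) {1..N}) + 0"
    using convergent_pmf_moran_dist_vertices[OF S0] transient
    by (intro tendsto_add) (auto simp: convergent_LIMSEQ_iff)
  ultimately show ?thesis
    by (intro LIMSEQ_le_const) auto
qed

lemma drift_geom_potential:
  assumes "0 < card S"
  shows "drift (geom_potential r N) S = r ^ (card S - 1) * ((r - 1) / (r ^ N - 1))
           * (r * boundary_weight EA N S - boundary_weight EB N ({1..N} - S))"
proof -
  obtain t where t: "card S = Suc t" using assms gr0_implies_Suc by blast
  define \<gamma> where "\<gamma> = (r - 1) / (r ^ N - 1)"
  have up: "geom_potential r N (Suc (Suc t)) - geom_potential r N (Suc t) = r ^ Suc t * \<gamma>"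
    and down: "geom_potential r N t - geom_potential r N (Suc t) = - (r ^ t * \<gamma>)"
    using geom_potential_Suc_diff[of r N "Suc t"] geom_potential_Suc_diff[of r N t]
    by (simp_all add: \<gamma>_def)
  show ?thesis
    unfolding drift_def t diff_Suc_1 up down \<gamma>_def[symmetric] by (simp add: algebra_simps)
qed

lemma drift_geom_potential_nonneg:
  fixes r :: real
  assumes "0 < r" "r \<noteq> 1" "S \<subseteq> {1..N}"
    and "0 < card S \<Longrightarrow> boundary_weight EB N ({1..N} - S) \<le> r * boundary_weight EA N S"
  shows "0 \<le> drift (geom_potential r N) S"
proof (cases "0 < card S")
  case True
  have "0 \<le> r ^ (card S - 1) * ((r - 1) / (r ^ N - 1))"
    using assms(1) geom_potential_slope_pos[OF assms(1,2) N_pos]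
    by (intro mult_nonneg_nonneg zero_le_power) auto
  then show ?thesis
    unfolding drift_geom_potential[OF True]
    by (rule mult_nonneg_nonneg) (use assms(4)[OF True] in simp)
qed (use subset_vertices_card_eq(2)[OF assms(3)] in simp)

lemma drift_geom_potential_nonpos:
  fixes r :: real
  assumes "0 < r" "r \<noteq> 1" "S \<subseteq> {1..N}"
    and "0 < card S \<Longrightarrow> r * boundary_weight EA N S \<le> boundary_weight EB N ({1..N} - S)"
  shows "drift (geom_potential r N) S \<le> 0"
proof (cases "0 < card S")
  case True
  have "0 \<le> r ^ (card S - 1) * ((r - 1) / (r ^ N - 1))"
    using assms(1) geom_potential_slope_pos[OF assms(1,2) N_pos]
    by (intro mult_nonneg_nonneg zero_le_power) auto
  then show ?thesis
    unfolding drift_geom_potential[OF True]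
    by (rule mult_nonneg_nonpos) (use assms(4)[OF True] in simp)
qed (use subset_vertices_card_eq(2)[OF assms(3)] in simp)

lemma transient_tendsto_zero:
  fixes r :: real
  assumes S0: "S0 \<subseteq> {1..N}" and "1 < r" "0 < c"
    and gap: "\<And>S. S \<subseteq> {1..N} \<Longrightarrow> 0 < card S \<Longrightarrow> card S < N \<Longrightarrow>
                c \<le> r * boundary_weight EA N S - boundary_weight EB N ({1..N} - S)"
  shows "(\<lambda>n. measure_pmf.expectation (moran_dist EA EB N S0 n)
            (\<lambda>T. of_bool (0 < card T \<and> card T < N) :: real)) \<longlonglongrightarrow> 0"
proof -
  define \<gamma> where "\<gamma> = (r - 1) / (r ^ N - 1)"
  have \<gamma>: "0 < \<gamma>" unfolding \<gamma>_def using assms(2) N_pos by (intro geom_potential_slope_pos) auto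
  show ?thesis
  proof (rule expectation_moran_dist_tendsto_zero[OF S0, of "c * \<gamma>" _ "geom_potential r N"])
    fix S assume S: "S \<subseteq> {1..N}"
    show "c * \<gamma> * of_bool (0 < card S \<and> card S < N) \<le> drift (geom_potential r N) S"
    proof (cases "0 < card S \<and> card S < N")
      case True
      have "1 \<le> r ^ (card S - 1)" using assms(2) by (simp add: one_le_power)
      then have "\<gamma> \<le> r ^ (card S - 1) * \<gamma>" using mult_right_mono[of 1 _ \<gamma>] \<gamma> by simp
      then have "\<gamma> * c \<le> (r ^ (card S - 1) * \<gamma>)
                  * (r * boundary_weight EA N S - boundary_weight EB N ({1..N} - S))"
        by (rule mult_mono) (use gap[OF S] True \<gamma> assms(2,3) in auto)
      then show ?thesis
        using True unfolding drift_geom_potential[OF conjunct1[OF True]] \<gamma>_def[symmetric]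
        by (simp add: ac_simps)
    next
      case False
      then have "S = {} \<or> S = {1..N}"
        using subset_vertices_card_eq[OF S] card_mono[OF _ S] by force
      then have "drift (geom_potential r N) S = 0" by auto
      then show ?thesis using False by auto
    qed
  qed (use \<gamma> assms(3) in auto)
qed

end

section \<open>Complete and complete bipartite graphs\<close>

lemma nbrs_complete_graph: "v \<in> {1..N} \<Longrightarrow> nbrs complete_graph N v = {1..N} - {v}"
  by (auto simp: nbrs_def complete_graph_def)

lemma nbrs_bipartite_half:
  "nbrs (bipartite_half N) N v = (if v \<le> N div 2 then {N div 2<..N} else {1..N div 2})"
  by (auto simp: nbrs_def bipartite_half_def)

lemma boundary_weight_complete_graph:
  assumes S: "S \<subseteq> {1..N}"
  shows "boundary_weight complete_graph N S = real (card S) * (real N - real (card S)) / (real N - 1)"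
proof -
  have fin: "finite S" using S finite_subset by blast
  have "boundary_weight complete_graph N S = (\<Sum>v\<in>S. (real N - real (card S)) / (real N - 1))"
    unfolding boundary_weight_def
  proof (rule sum.cong)
    fix v assume v: "v \<in> S"
    then have "v \<in> {1..N}" using S by auto
    then have "nbrs complete_graph N v - S = {1..N} - S" "card (nbrs complete_graph N v) = N - 1"
      using v by (auto simp: nbrs_complete_graph)
    moreover have "card S \<le> N" "1 \<le> N" using card_mono[OF _ S] \<open>v \<in> {1..N}\<close> by auto
    ultimately show "real (card (nbrs complete_graph N v - S)) / real (card (nbrs complete_graph N v))
        = (real N - real (card S)) / (real N - 1)"
      using card_Diff_subset[OF fin S] by (simp add: of_nat_diff)
  qed simp
  then show ?thesis by simp
qed

lemma boundary_weight_complete_graph_complement: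
  assumes "S \<subseteq> {1..N}"
  shows "boundary_weight complete_graph N ({1..N} - S) = boundary_weight complete_graph N S"
proof -
  have "card ({1..N} - S) = N - card S" "card S \<le> N"
    using assms finite_subset[OF assms] card_mono[OF _ assms] by (auto simp: card_Diff_subset)
  then show ?thesis
    using assms by (simp add: boundary_weight_complete_graph Diff_subset of_nat_diff)
qed

lemma boundary_weight_complete_graph_ge_1:
  assumes "S \<subseteq> {1..N}" "0 < card S" "card S < N"
  shows "1 \<le> boundary_weight complete_graph N S"
proof -
  have "0 \<le> (real (card S) - 1) * (real N - real (card S) - 1)"
    using assms(2,3) by (intro mult_nonneg_nonneg) auto
  then have "real N - 1 \<le> real (card S) * (real N - real (card S))"
    by (simp add: algebra_simps)
  then show ?thesis
    using assms by (simp add: boundary_weight_complete_graph)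
qed

lemma boundary_weight_bipartite_half:
  assumes "even N" and S: "S \<subseteq> {1..N}"
  defines "n \<equiv> N div 2"
    and "i \<equiv> card (S \<inter> {..N div 2})" and "j \<equiv> card (S \<inter> {N div 2<..})"
  shows "boundary_weight (bipartite_half N) N S
       = (real i * (real n - real j) + real j * (real n - real i)) / real n"
proof -
  define L where "L = {1..n}"
  define R where "R = {n<..N}"
  have fin: "finite S" using S finite_subset by blast
  have N: "N = 2 * n" using assms(1) by (simp add: n_def)
  have cL: "card L = n" and cR: "card R = n" by (simp_all add: L_def R_def N)
  have SL: "S \<inter> {..N div 2} = L \<inter> S" and SR: "S \<inter> {N div 2<..} = R \<inter> S"
    using S by (auto simp: L_def R_def n_def)
  have "i \<le> n" "j \<le> n"
    unfolding i_def j_def SL SR using cL cR by (metis card_mono finite_atLeastAtMost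
        finite_greaterThanAtMost inf_le1 L_def R_def)+
  have "card (L - S) = n - i" "card (R - S) = n - j"
    unfolding i_def j_def SL SR using cL cR by (simp_all add: card_Diff_subset_Int L_def R_def)
  then have "boundary_weight (bipartite_half N) N S
      = (\<Sum>v\<in>S. if v \<le> n then real (n - j) / n else real (n - i) / n)"
    unfolding boundary_weight_def
    by (intro sum.cong) (auto simp: nbrs_bipartite_half n_def[symmetric] L_def[symmetric]
        R_def[symmetric] cL cR)
  also have "\<dots> = real i * (real (n - j) / n) + real j * (real (n - i) / n)"
    using fin by (simp add: sum.If_cases i_def j_def n_def Int_def atMost_def greaterThan_def not_le)
  also have "\<dots> = (real i * (real n - real j) + real j * (real n - real i)) / real n"
    using \<open>i \<le> n\<close> \<open>j \<le> n\<close> by (simp add: of_nat_diff add_divide_distrib)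
  finally show ?thesis .
qed

text \<open>With s = i + j, the identity i(n - j) + j(n - i) = s(2n - s)/2 + (i - j)^2/2 gives
  a bipartite weight of at least s(N - s)/N.\<close>
lemma boundary_weight_complete_graph_le_bipartite_half:
  assumes "even N" "S \<subseteq> {1..N}"
  shows "(real N - 1) / real N * boundary_weight complete_graph N S
       \<le> boundary_weight (bipartite_half N) N S"
proof -
  define n where "n = N div 2"
  define i where "i = card (S \<inter> {..n})"
  define j where "j = card (S \<inter> {n<..})"
  have "N = 2 * n" using assms(1) by (simp add: n_def)
  then have N: "real N = 2 * real n" by simp
  have s: "card S = i + j"
    using finite_subset[OF assms(2)] card_Int_Diff[of S "{..n}"]
    by (simp add: i_def j_def Diff_eq not_le[symmetric] atMost_def greaterThan_def Compl_eq)
  show ?thesis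
  proof (cases "n = 0")
    case True
    then show ?thesis using N by (simp add: boundary_weight_nonneg)
  next
    case False
    have "(real i + real j) * (2 * real n - (real i + real j)) / (2 * real n)
        \<le> (real i * (real n - real j) + real j * (real n - real i)) / real n"
    proof -
      have "(real i + real j) * (2 * real n - (real i + real j))
          \<le> 2 * (real i * (real n - real j) + real j * (real n - real i))"
        using zero_le_power2[of "real i - real j"] by (simp add: algebra_simps power2_eq_square)
      then have "(real i + real j) * (2 * real n - (real i + real j)) / (2 * real n)
          \<le> 2 * (real i * (real n - real j) + real j * (real n - real i)) / (2 * real n)"
        by (rule divide_right_mono) simp
      moreover have "2 * y / (2 * real n) = y / real n" for y :: real
        by simp
      ultimately show ?thesis by (simp only:)
    qed
    moreover have "real N \<noteq> 1" using assms(1) by auto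
    ultimately show ?thesis
      using assms False N s
      by (simp add: boundary_weight_complete_graph boundary_weight_bipartite_half
          n_def[symmetric] i_def[symmetric] j_def[symmetric])
  qed
qed

lemma moran_graphs_bipartite_half_complete_graph:
  assumes "even N" "2 \<le> N"
  shows "moran_graphs (bipartite_half N) complete_graph N"
    and "moran_graphs complete_graph (bipartite_half N) N"
proof -
  have "nbrs (bipartite_half N) N v \<noteq> {}" for v
    using assms by (auto simp: nbrs_bipartite_half)
  moreover have "nbrs complete_graph N v \<noteq> {}" if "v \<in> {1..N}" for v
  proof -
    have "(if v = 1 then 2 else 1) \<in> nbrs complete_graph N v"
      using that assms by (auto simp: nbrs_complete_graph)
    then show ?thesis by blast
  qed
  ultimately show "moran_graphs (bipartite_half N) complete_graph N"
    and "moran_graphs complete_graph (bipartite_half N) N"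
    using assms by unfold_locales auto
qed

lemma fixation_bipartite_half_complete_graph_ge:
  assumes "even N" "2 \<le> N" "v \<in> {1..N}"
  shows "geom_potential (real N / (real N - 1)) N 1
       \<le> lim (\<lambda>n. pmf (moran_dist (bipartite_half N) complete_graph N {v} n) {1..N})"
proof -
  interpret moran_graphs "bipartite_half N" complete_graph N
    by (rule moran_graphs_bipartite_half_complete_graph(1)[OF assms(1,2)])
  define r where "r = real N / (real N - 1)"
  have S0: "{v} \<subseteq> {1..N}" using assms(3) by simp
  have r: "1 < r" "r \<le> 2" using assms(2) by (auto simp: r_def field_simps)
  have compl: "boundary_weight complete_graph N ({1..N} - S) \<le> r * boundary_weight (bipartite_half N) N S"
    if "S \<subseteq> {1..N}" for S
    using boundary_weight_complete_graph_le_bipartite_half[OF assms(1) that] assms(2)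
    by (simp add: boundary_weight_complete_graph_complement[OF that] r_def field_simps)
  \<comment> \<open>Since r \<le> 2, for the ratio 3 the gap 3 a - b is at least a \<ge> 1/2 on transient states.\<close>
  have gap: "1 / 2 \<le> 3 * boundary_weight (bipartite_half N) N S
                     - boundary_weight complete_graph N ({1..N} - S)"
    if "S \<subseteq> {1..N}" "0 < card S" "card S < N" for S
  proof -
    have "(real N - 1) / real N \<le> (real N - 1) / real N * boundary_weight complete_graph N S"
      using mult_left_mono[OF boundary_weight_complete_graph_ge_1[OF that], of "(real N - 1) / real N"]
        assms(2) by simp
    moreover have "1 / 2 \<le> (real N - 1) / real N" using assms(2) by (simp add: field_simps)
    ultimately show ?thesis
      using boundary_weight_complete_graph_le_bipartite_half[OF assms(1) that(1)] compl[OF that(1)] r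
        boundary_weight_nonneg[of "bipartite_half N" N S] mult_right_mono[OF r(2), of "boundary_weight (bipartite_half N) N S"]
      by linarith
  qed
  have "geom_potential r N (card {v}) \<le> lim (\<lambda>n. pmf (moran_dist (bipartite_half N) complete_graph N {v} n) {1..N})"
  proof (rule lim_pmf_moran_dist_vertices_ge[OF S0])
    show "0 \<le> drift (geom_potential r N) S" if "S \<subseteq> {1..N}" for S
      using r compl that by (intro drift_geom_potential_nonneg) auto
    show "geom_potential r N k \<le> of_bool (0 < k)" if "k \<le> N" for k
      using r that N_pos by (intro geom_potential_bounds) auto
    show "(\<lambda>n. measure_pmf.expectation (moran_dist (bipartite_half N) complete_graph N {v} n)
            (\<lambda>T. of_bool (0 < card T \<and> card T < N) :: real)) \<longlonglongrightarrow> 0"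
      by (rule transient_tendsto_zero[OF S0, of 3 "1/2"]) (use gap in auto)
  qed
  then show ?thesis by (simp add: r_def One_nat_def)
qed

lemma fixation_complete_graph_bipartite_half_le:
  assumes "even N" "2 \<le> N" "v \<in> {1..N}"
  shows "lim (\<lambda>n. pmf (moran_dist complete_graph (bipartite_half N) N {v} n) {1..N})
       \<le> geom_potential ((real N - 1) / real N) N 1"
proof -
  interpret moran_graphs complete_graph "bipartite_half N" N
    by (rule moran_graphs_bipartite_half_complete_graph(2)[OF assms(1,2)])
  define q where "q = (real N - 1) / real N"
  have S0: "{v} \<subseteq> {1..N}" using assms(3) by simp
  have q: "0 < q" "q \<noteq> 1" using assms(2) by (auto simp: q_def field_simps)
  have "lim (\<lambda>n. pmf (moran_dist complete_graph (bipartite_half N) N {v} n) {1..N})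
      \<le> geom_potential q N (card {v})"
  proof (rule lim_pmf_moran_dist_vertices_le[OF S0])
    show "drift (geom_potential q N) S \<le> 0" if S: "S \<subseteq> {1..N}" for S
    proof (rule drift_geom_potential_nonpos[OF q S])
      have "{1..N} - S \<subseteq> {1..N}" by blast
      then show "q * boundary_weight complete_graph N S \<le> boundary_weight (bipartite_half N) N ({1..N} - S)"
        using boundary_weight_complete_graph_le_bipartite_half[OF assms(1)]
        by (metis q_def boundary_weight_complete_graph_complement[OF S])
    qed
    show "of_bool (k = N) \<le> geom_potential q N k" if "k \<le> N" for k
      using q that N_pos by (intro geom_potential_bounds) auto
  qed
  then show ?thesis by (simp add: q_def One_nat_def)
qed

lemma fix_prob_ge:
  assumes "0 < N" "\<And>v. v \<in> {1..N} \<Longrightarrow> c \<le> lim (\<lambda>n. pmf (moran_dist EA EB N {v} n) {1..N})"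
  shows "c \<le> fix_prob EA EB N"
proof -
  have "real N * c \<le> (\<Sum>v\<in>{1..N}. lim (\<lambda>n. pmf (moran_dist EA EB N {v} n) {1..N}))"
    using sum_mono[of "{1..N}" "\<lambda>_. c", OF assms(2)] by simp
  then show ?thesis using assms(1) by (simp add: fix_prob_def field_simps)
qed

lemma fix_prob_le:
  assumes "0 < N" "\<And>v. v \<in> {1..N} \<Longrightarrow> lim (\<lambda>n. pmf (moran_dist EA EB N {v} n) {1..N}) \<le> c"
  shows "fix_prob EA EB N \<le> c"
proof -
  have "(\<Sum>v\<in>{1..N}. lim (\<lambda>n. pmf (moran_dist EA EB N {v} n) {1..N})) \<le> real N * c"
    using sum_mono[of "{1..N}" _ "\<lambda>_. c", OF assms(2)] by simp
  then show ?thesis using assms(1) by (simp add: fix_prob_def field_simps)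
qed

theorem theorem2:
  fixes N :: nat
  assumes "even N" and "N \<ge> 2"
  shows "fix_prob (bipartite_half N) complete_graph N > 1 / (exp 1 - 1) * (1 / real N)
     \<and> fix_prob complete_graph (bipartite_half N) N < exp 1 / (exp 1 - 1) * (1 / real N)"
proof
  have "1 / (exp 1 - 1) * (1 / real N) < geom_potential (real N / (real N - 1)) N 1"
    by (rule geom_potential_lower_numeric[OF assms(2)])
  also have "\<dots> \<le> fix_prob (bipartite_half N) complete_graph N"
    using assms by (intro fix_prob_ge fixation_bipartite_half_complete_graph_ge) auto
  finally show "fix_prob (bipartite_half N) complete_graph N > 1 / (exp 1 - 1) * (1 / real N)" .
  have "fix_prob complete_graph (bipartite_half N) N \<le> geom_potential ((real N - 1) / real N) N 1"
    using assms by (intro fix_prob_le fixation_complete_graph_bipartite_half_le) auto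
  also have "\<dots> < exp 1 / (exp 1 - 1) * (1 / real N)"
    by (rule geom_potential_upper_numeric[OF assms(2)])
  finally show "fix_prob complete_graph (bipartite_half N) N < exp 1 / (exp 1 - 1) * (1 / real N)" .
qed

end
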